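(* Let $\mathscr{V}\subseteq\mathfrak{B}(\mathcal{H})$ be a linear subspace with ${\rm supp}(\mathscr{V})=\mathcal{H}$, let $\rho$ be a positive definite operator with $\rho\sim{\rm alg}(\mathcal{D}_\rho^{-1}(\mathscr{V}))$, and let $\sigma$ be another positive definite operator. If $\mathcal{D}_\rho^{-1}(\sigma)\in{\rm alg}(\mathcal{D}_\rho^{-1}(\mathscr{V}))$, then $${\rm alg}\big(\mathcal{D}_\sigma^{-1}(\mathscr{V})\big)\subseteq\mathcal{D}_\sigma^{-1}\big({\rm alg}_\rho(\mathscr{V})\big).$$
   Context: $\mathcal{H}$ finite-dimensional complex Hilbert space, $\mathfrak{B}(\mathcal{H})$ its linear operators. A $*$-algebra is a linear subspace of $\mathfrak{B}(\mathcal{H})$ closed under products and adjoints; ${\rm alg}(\mathcal{S})$ is the smallest $*$-algebra containing $\mathcal{S}$. ${\rm supp}(X)=(\ker X)^\perp$, ${\rm supp}(\mathcal{S})=\sum_{X\in\mathcal{S}}{\rm supp}(X)$. For positive definite $\rho$, $\mathcal{D}_\rho(X)=\rho^{1/2}X\rho^{1/2}$, $\mathcal{D}_\rho^{-1}(X)=\rho^{-1/2}X\rho^{-1/2}$. A $\rho$-distorted algebra is a linear subspace closed under adjoints and the product $X\cdot_\rho Y=X\rho^{-1}Y$; ${\rm alg}_\rho(\mathcal{S})$ is the smallest one containing $\mathcal{S}$. Wedderburn decomposition of a unital $*$-algebra $\mathscr{A}$: unitary $U$, $\mathcal{H}\cong\bigoplus_l\mathcal{H}_{S,l}\otimes\mathcal{H}_{F,l}$,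 $\mathscr{A}=U(\bigoplus_l\mathfrak{B}(\mathcal{H}_{S,l})\otimes I_{F,l})U^\dagger$. Compatibility: $\rho\sim\mathscr{A}$ if for some Wedderburn decomposition of $\mathscr{A}$, $\rho=U(\bigoplus_l\rho_{S,l}\otimes\tau_{F,l})U^\dagger$ with $\rho_{S,l}\in\mathfrak{B}(\mathcal{H}_{S,l})$, $\tau_{F,l}\in\mathfrak{B}(\mathcal{H}_{F,l})$. *)

theory Defs
  imports "HOL-Analysis.Analysis"
begin

text \<open>The Hilbert space H is complex^'n (with the standard inner product) for an
 arbitrary finite type 'n; operators are matrices complex^'n^'n.\<close>

type_synonym 'n cmat = "complex ^ 'n ^ 'n"

definition cinner :: "complex ^ 'n \<Rightarrow> complex ^ 'n \<Rightarrow> complex" where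
  "cinner x y = (\<Sum>i\<in>UNIV. cnj (x $ i) * y $ i)"

definition adj :: "'n::finite cmat \<Rightarrow> 'n cmat" where
  "adj A = (\<chi> i j. cnj (A $ j $ i))"

definition csmult :: "complex \<Rightarrow> 'n::finite cmat \<Rightarrow> 'n cmat" where
  "csmult c A = (\<chi> i j. c * A $ i $ j)"

definition op_subspace :: "'n::finite cmat set \<Rightarrow> bool" where
  "op_subspace S \<longleftrightarrow> 0 \<in> S \<and> (\<forall>X\<in>S. \<forall>Y\<in>S. X + Y \<in> S) \<and> (\<forall>c. \<forall>X\<in>S. csmult c X \<in> S)"

definition vec_subspace :: "(complex ^ 'n) set \<Rightarrow> bool" where
  "vec_subspace W \<longleftrightarrow> 0 \<in> W \<and> (\<forall>x\<in>W. \<forall>y\<in>W. x + y \<in> W) \<and> (\<forall>(c::complex). \<forall>x\<in>W. c *s x \<in> W)"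

definition star_algebra :: "'n::finite cmat set \<Rightarrow> bool" where
  "star_algebra S \<longleftrightarrow> op_subspace S \<and> (\<forall>X\<in>S. \<forall>Y\<in>S. X ** Y \<in> S) \<and> (\<forall>X\<in>S. adj X \<in> S)"

definition alg :: "'n::finite cmat set \<Rightarrow> 'n cmat set" where
  "alg S = \<Inter>{A. star_algebra A \<and> S \<subseteq> A}"

definition supp :: "'n::finite cmat \<Rightarrow> (complex ^ 'n) set" where
  "supp X = {y. \<forall>x. X *v x = 0 \<longrightarrow> cinner x y = 0}"

definition supp_set :: "'n::finite cmat set \<Rightarrow> (complex ^ 'n) set" where
  "supp_set S = \<Inter>{W. vec_subspace W \<and> (\<forall>X\<in>S. supp X \<subseteq> W)}"

definition pos_semidef :: "'n::finite cmat \<Rightarrow> bool" where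
  "pos_semidef A \<longleftrightarrow> (\<forall>x. cinner x (A *v x) \<in> \<real> \<and> 0 \<le> Re (cinner x (A *v x)))"

definition pos_def :: "'n::finite cmat \<Rightarrow> bool" where
  "pos_def A \<longleftrightarrow> adj A = A \<and> (\<forall>x. x \<noteq> 0 \<longrightarrow> cinner x (A *v x) \<in> \<real> \<and> 0 < Re (cinner x (A *v x)))"

definition msqrt :: "'n::finite cmat \<Rightarrow> 'n cmat" where
  "msqrt A = (THE R. pos_semidef R \<and> R ** R = A)"

definition D :: "'n::finite cmat \<Rightarrow> 'n cmat \<Rightarrow> 'n cmat" where
  "D \<rho> X = msqrt \<rho> ** X ** msqrt \<rho>"

definition Dinv :: "'n::finite cmat \<Rightarrow> 'n cmat \<Rightarrow> 'n cmat" where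
  "Dinv \<rho> X = matrix_inv (msqrt \<rho>) ** X ** matrix_inv (msqrt \<rho>)"

definition distorted_algebra :: "'n::finite cmat \<Rightarrow> 'n cmat set \<Rightarrow> bool" where
  "distorted_algebra \<rho> S \<longleftrightarrow> op_subspace S \<and> (\<forall>X\<in>S. adj X \<in> S)
     \<and> (\<forall>X\<in>S. \<forall>Y\<in>S. X ** matrix_inv \<rho> ** Y \<in> S)"

definition alg_rho :: "'n::finite cmat \<Rightarrow> 'n cmat set \<Rightarrow> 'n cmat set" where
  "alg_rho \<rho> S = \<Inter>{A. distorted_algebra \<rho> A \<and> S \<subseteq> A}"

definition unitary :: "'n::finite cmat \<Rightarrow> bool" where
  "unitary U \<longleftrightarrow> U ** adj U = mat 1 \<and> adj U ** U = mat 1"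

text \<open>Block operators: the index set 'n is identified (via phi) with the set of
 triples (l,s,f), l < L, s < dS l, f < dF l, i.e. H = (+)_l H_{S,l} (x) H_{F,l}
 with dim H_{S,l} = dS l, dim H_{F,l} = dF l.  blockop phi a b is (+)_l a_l (x) b_l.\<close>
definition blockop :: "('n::finite \<Rightarrow> nat \<times> nat \<times> nat) \<Rightarrow> (nat \<Rightarrow> nat \<Rightarrow> nat \<Rightarrow> complex)
     \<Rightarrow> (nat \<Rightarrow> nat \<Rightarrow> nat \<Rightarrow> complex) \<Rightarrow> 'n cmat" where
  "blockop \<phi> a b = (\<chi> i j. (case \<phi> i of (l, s, f) \<Rightarrow> case \<phi> j of (l', s', f') \<Rightarrow>
       if l = l' then a l s s' * b l f f' else 0))"

definition decomp_index :: "('n::finite \<Rightarrow> nat \<times> nat \<times> nat) \<Rightarrow> nat \<Rightarrow> (nat \<Rightarrow> nat) \<Rightarrow> (nat \<Rightarrow> nat) \<Rightarrow> bool" where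
  "decomp_index \<phi> L dS dF \<longleftrightarrow> (\<forall>l<L. 0 < dS l \<and> 0 < dF l)
     \<and> bij_betw \<phi> UNIV {(l, s, f). l < L \<and> s < dS l \<and> f < dF l}"

definition wedderburn :: "'n::finite cmat set \<Rightarrow> 'n cmat \<Rightarrow> ('n \<Rightarrow> nat \<times> nat \<times> nat)
     \<Rightarrow> nat \<Rightarrow> (nat \<Rightarrow> nat) \<Rightarrow> (nat \<Rightarrow> nat) \<Rightarrow> bool" where
  "wedderburn A U \<phi> L dS dF \<longleftrightarrow> unitary U \<and> decomp_index \<phi> L dS dF
     \<and> A = {U ** blockop \<phi> a (\<lambda>l f f'. if f = f' then 1 else 0) ** adj U | a. True}"

definition compatible :: "'n::finite cmat \<Rightarrow> 'n cmat set \<Rightarrow> bool" where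
  "compatible \<rho> A \<longleftrightarrow> (\<exists>U \<phi> L dS dF. wedderburn A U \<phi> L dS dF
     \<and> (\<exists>r t. \<rho> = U ** blockop \<phi> r t ** adj U))"

end

theory Submission
  imports Defs
begin

text \<open>Conjugation by \<open>\<rho>\<^sup>-\<^sup>1\<^sup>/\<^sup>2\<close> turns the distorted product into the ordinary one,
  \<open>Dinv \<rho> X ** Dinv \<rho> Y = Dinv \<rho> (X ** matrix_inv \<rho> ** Y)\<close>, so \<open>Dinv \<rho>\<close> maps every
  \<open>\<rho>\<close>-distorted algebra onto a \<open>*\<close>-algebra and \<open>alg (Dinv \<rho> ` V) \<subseteq> Dinv \<rho> ` alg_rho \<rho> V\<close>
  for every positive definite \<open>\<rho>\<close>. The hypothesis on \<open>\<sigma>\<close> thus gives \<open>\<sigma> \<in> alg_rho \<rho> V\<close>.\<close>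

lemma matrix_inv_right:
  assumes "invertible A" shows "A ** matrix_inv A = mat 1"
  using someI_ex[OF assms[unfolded invertible_def]] unfolding matrix_inv_def by blast

lemma matrix_inv_left:
  assumes "invertible A" shows "matrix_inv A ** A = mat 1"
  using someI_ex[OF assms[unfolded invertible_def]] unfolding matrix_inv_def by blast

lemma matrix_inv_unique_left: "B ** A = mat 1 \<Longrightarrow> invertible A \<Longrightarrow> B = matrix_inv A"
  by (metis matrix_inv_right matrix_mul_assoc matrix_mul_lid matrix_mul_rid)

lemma matrix_inv_unique_right: "A ** B = mat 1 \<Longrightarrow> invertible A \<Longrightarrow> B = matrix_inv A"
  by (metis matrix_inv_left matrix_mul_assoc matrix_mul_lid matrix_mul_rid)

lemma invertible_matrix_inv: "invertible A \<Longrightarrow> invertible (matrix_inv A)"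
  using matrix_inv_left matrix_inv_right unfolding invertible_def by blast

lemma matrix_add_rdistrib: "(A + B) ** C = A ** C + B ** (C :: 'a::semiring_1^'n^'m)"
  by (simp add: vec_eq_iff matrix_matrix_mult_def sum.distrib distrib_right)

lemma csmult_matrix_mult_left: "csmult c A ** B = csmult c (A ** B)"
  by (simp add: csmult_def matrix_matrix_mult_def vec_eq_iff sum_distrib_left mult_ac)

lemma csmult_matrix_mult_right: "A ** csmult c B = csmult c (A ** B)"
  by (simp add: csmult_def matrix_matrix_mult_def vec_eq_iff sum_distrib_left mult_ac)

lemma scaleR_eq_csmult: "r *\<^sub>R A = csmult (complex_of_real r) A"
  by (simp add: csmult_def vec_eq_iff complex_eq_iff)

lemma op_subspace_imp_subspace: "op_subspace S \<Longrightarrow> subspace S"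
  unfolding subspace_def op_subspace_def by (auto simp: scaleR_eq_csmult)

lemma adj_mult: "adj (A ** B) = adj B ** adj A"
  by (simp add: adj_def matrix_matrix_mult_def vec_eq_iff mult.commute)

lemma adj_mat_1 [simp]: "adj (mat 1) = mat 1"
  by (simp add: adj_def vec_eq_iff mat_def)

lemma adj_matrix_inv: "invertible A \<Longrightarrow> adj (matrix_inv A) = matrix_inv (adj A)"
  by (metis adj_mult adj_mat_1 invertible_def matrix_inv_left matrix_inv_right matrix_inv_unique_left)

lemma scaleR_eq_vector_smult: "r *\<^sub>R (x :: complex^'n) = complex_of_real r *s x"
  by (simp add: vec_eq_iff complex_eq_iff)

lemma inner_eq_Re_cinner: "inner (x :: complex^'n) y = Re (cinner x y)"
  by (simp add: inner_vec_def cinner_def inner_complex_def Re_sum)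

lemma cinner_add_right: "cinner x (y + z) = cinner x y + cinner x z"
  by (simp add: cinner_def distrib_left sum.distrib)

lemma cinner_add_left: "cinner (x + y) z = cinner x z + cinner y z"
  by (simp add: cinner_def distrib_right sum.distrib)

lemma cinner_diff_right: "cinner x (y - z) = cinner x y - cinner x z"
  by (simp add: cinner_def right_diff_distrib sum_subtractf)

lemma cinner_diff_left: "cinner (x - y) z = cinner x z - cinner y z"
  by (simp add: cinner_def left_diff_distrib sum_subtractf)

lemma cinner_scale_right: "cinner x (c *s y) = c * cinner x y"
  by (simp add: cinner_def sum_distrib_left algebra_simps)

lemma cinner_scale_left: "cinner (c *s x) y = cnj c * cinner x y"
  by (simp add: cinner_def sum_distrib_left algebra_simps)

lemma cinner_minus_right: "cinner x (- y) = - cinner x y"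
  by (simp add: cinner_def sum_negf)

lemma cinner_zero_right [simp]: "cinner x 0 = 0"
  by (simp add: cinner_def)

lemma cinner_commute: "cinner y x = cnj (cinner x y)"
  by (simp add: cinner_def mult.commute)

lemma cinner_sum_right: "cinner x (sum f S) = (\<Sum>u\<in>S. cinner x (f u))"
  by (induction S rule: infinite_finite_induct) (auto simp: cinner_add_right)

lemma cinner_self: "cinner x x = complex_of_real ((norm x)\<^sup>2)"
proof -
  have "cinner x x = (\<Sum>i\<in>UNIV. complex_of_real ((norm (x $ i))\<^sup>2))"
    unfolding cinner_def
    by (intro sum.cong refl) (metis complex_norm_square mult.commute of_real_power)
  also have "\<dots> = complex_of_real ((norm x)\<^sup>2)"
    by (simp add: norm_vec_def L2_set_def sum_nonneg)
  finally show ?thesis .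
qed

lemma Re_cinner_self: "Re (cinner x x) = (norm x)\<^sup>2"
  by (simp add: cinner_self)

lemma cinner_adj: "cinner x (A *v y) = cinner (adj A *v x) y"
proof -
  have "cinner x (A *v y) = (\<Sum>i\<in>UNIV. \<Sum>j\<in>UNIV. cnj (x$i) * A$i$j * y$j)"
    by (simp add: cinner_def matrix_vector_mult_def sum_distrib_left mult.assoc)
  also have "\<dots> = (\<Sum>j\<in>UNIV. \<Sum>i\<in>UNIV. cnj (x$i) * A$i$j * y$j)"
    by (rule sum.swap)
  also have "\<dots> = cinner (adj A *v x) y"
    by (simp add: cinner_def matrix_vector_mult_def adj_def sum_distrib_left mult_ac)
  finally show ?thesis .
qed

lemma pos_def_invertible:
  assumes "pos_def A" shows "invertible A"
proof -
  have "\<forall>x. A *v x = 0 \<longrightarrow> x = 0"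
    using assms unfolding pos_def_def by force
  thus ?thesis
    by (simp add: invertible_left_inverse matrix_left_invertible_injective vec.inj_iff_eq_0)
qed

section \<open>Spectral theorem for Hermitian matrices\<close>

definition orthonormal_eigensystem :: "'n::finite cmat \<Rightarrow> (complex^'n) set \<Rightarrow> (complex^'n \<Rightarrow> real) \<Rightarrow> bool" where
  "orthonormal_eigensystem A S lam \<longleftrightarrow>
     (\<forall>u\<in>S. cinner u u = 1 \<and> A *v u = complex_of_real (lam u) *s u)
     \<and> (\<forall>u\<in>S. \<forall>w\<in>S. u \<noteq> w \<longrightarrow> cinner u w = 0)"

lemma orthonormal_eigensystem_card_le:
  fixes A :: "'n::finite cmat"
  assumes "orthonormal_eigensystem A S lam"
  shows "finite S \<and> card S \<le> DIM(complex^'n)"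
proof -
  have "pairwise orthogonal S" "0 \<notin> S"
    using assms by (auto simp: pairwise_def orthogonal_def inner_eq_Re_cinner orthonormal_eigensystem_def)
  hence "independent S" by (rule pairwise_orthogonal_independent)
  thus ?thesis using independent_bound by blast
qed

lemma cinner_orthonormal_expansion:
  assumes "orthonormal_eigensystem A S lam" "finite S" "w \<in> S"
  shows "cinner w (\<Sum>u\<in>S. c u *s u) = c w"
proof -
  have "cinner w (\<Sum>u\<in>S. c u *s u) = (\<Sum>u\<in>S. c u * cinner w u)"
    by (simp add: cinner_sum_right cinner_scale_right)
  also have "\<dots> = (\<Sum>u\<in>S. if w = u then c w else 0)"
    using assms by (intro sum.cong refl) (auto simp: orthonormal_eigensystem_def)
  finally have "cinner w (\<Sum>u\<in>S. c u *s u) = (\<Sum>u\<in>S. if w = u then c w else 0)" .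
  thus ?thesis using assms(2,3) by simp
qed

lemma Rayleigh_quotient_attains_max:
  fixes A :: "'n::finite cmat"
  assumes W: "subspace W" and x: "x \<in> W" "x \<noteq> 0"
  obtains v where "v \<in> W" "norm v = 1"
    "\<And>y. y \<in> W \<Longrightarrow> Re (cinner y (A *v y)) \<le> Re (cinner v (A *v v)) * (norm y)\<^sup>2"
proof -
  define f where "f y = Re (cinner y (A *v y))" for y
  define K where "K = W \<inter> sphere 0 1"
  have "compact K"
    unfolding K_def by (intro closed_Int_compact closed_subspace W compact_sphere)
  moreover have "(1 / norm x) *\<^sub>R x \<in> K"
    using x W by (auto simp: K_def subspace_def)
  moreover have "continuous_on K f"
    unfolding f_def cinner_def matrix_vector_mult_def by (simp; intro continuous_intros)
  ultimately obtain v where v: "v \<in> K" and vmax: "\<And>y. y \<in> K \<Longrightarrow> f y \<le> f v"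
    using continuous_attains_sup[of K f] by blast
  have f_scaleR: "f (c *\<^sub>R y) = c\<^sup>2 * f y" for c y
    by (simp add: f_def scaleR_eq_vector_smult cinner_scale_left cinner_scale_right
        vector_scalar_commute power2_eq_square)
  have "f y \<le> f v * (norm y)\<^sup>2" if "y \<in> W" for y
  proof (cases "y = 0")
    case True thus ?thesis by (simp add: f_def)
  next
    case False
    have "(1 / norm y) *\<^sub>R y \<in> K"
      using False that W by (auto simp: K_def subspace_def)
    hence "f ((1 / norm y) *\<^sub>R y) \<le> f v" by (rule vmax)
    hence "f y / (norm y)\<^sup>2 \<le> f v"
      by (simp add: f_scaleR power_divide)
    thus ?thesis using False by (simp add: divide_le_eq mult.commute)
  qed
  with v that show thesis by (auto simp: K_def f_def)
qed

lemma quadratic_nonpos_imp_linear_coeff_zero: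
  fixes a c :: real
  assumes "0 \<le> a" and le: "\<And>t. 2 * t * a + t\<^sup>2 * c \<le> 0"
  shows "a = 0"
proof (rule ccontr)
  assume "a \<noteq> 0"
  with assms(1) have a: "a > 0" by simp
  define t where "t = a / (\<bar>c\<bar> + 1)"
  have t: "t > 0" using a by (simp add: t_def add_pos_nonneg)
  have "t * \<bar>c\<bar> < a"
    using a unfolding t_def by (simp add: field_simps)
  moreover have "t * (- \<bar>c\<bar>) \<le> t * c"
    using t by (intro mult_left_mono) auto
  ultimately have "0 < t * (2 * a + t * c)"
    using a t by (intro mult_pos_pos) linarith+
  with le[of t] show False by (simp add: algebra_simps power2_eq_square)
qed

text \<open>Along \<open>y = v + t z\<close> with \<open>z = A v - \<mu> v\<close>, the defect \<open>Re \<langle>y, A y\<rangle> - \<mu> \<parallel>y\<parallel>\<^sup>2\<close> equals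
  \<open>2 t \<parallel>z\<parallel>\<^sup>2 + t\<^sup>2 c\<close>; maximality makes it nonpositive for all \<open>t\<close>, which forces \<open>z = 0\<close>.\<close>

lemma Rayleigh_maximiser_eigenvector:
  fixes A :: "'n::finite cmat"
  assumes herm: "adj A = A"
    and W_add: "\<And>y z. y \<in> W \<Longrightarrow> z \<in> W \<Longrightarrow> y + z \<in> W"
    and W_scale: "\<And>c y. y \<in> W \<Longrightarrow> c *s y \<in> W"
    and W_inv: "\<And>y. y \<in> W \<Longrightarrow> A *v y \<in> W"
    and v: "v \<in> W" "cinner v v = 1"
    and max: "\<And>y. y \<in> W \<Longrightarrow> Re (cinner y (A *v y)) \<le> \<mu> * (norm y)\<^sup>2"
    and \<mu>: "\<mu> = Re (cinner v (A *v v))"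
  shows "A *v v = complex_of_real \<mu> *s v"
proof -
  define z where "z = A *v v - complex_of_real \<mu> *s v"
  define n where "n = Re (cinner z z)"
  define c where "c = Re (cinner z (A *v z)) - \<mu> * n"
  have "z = A *v v + (- complex_of_real \<mu>) *s v"
    by (simp add: z_def vector_smult_lneg)
  hence "z \<in> W" using W_add W_scale W_inv v(1) by presburger
  have zAv: "cinner z (A *v v) - complex_of_real \<mu> * cinner z v = cinner z z"
    by (simp add: z_def cinner_diff_right cinner_scale_right)
  have Avz: "cinner (A *v v) z - complex_of_real \<mu> * cinner v z = cinner z z"
    by (simp add: z_def cinner_diff_left cinner_scale_left)
  have vAz: "cinner v (A *v z) = cinner (A *v v) z"
    using cinner_adj[of v A z] herm by simp
  have "2 * t * n + t\<^sup>2 * c \<le> 0" for t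
  proof -
    define y where "y = v + complex_of_real t *s z"
    have "y \<in> W" unfolding y_def using v(1) \<open>z \<in> W\<close> W_add W_scale by blast
    have qf: "cinner y (A *v y) = cinner v (A *v v)
        + complex_of_real t * (cinner v (A *v z) + cinner z (A *v v))
        + complex_of_real t ^ 2 * cinner z (A *v z)"
      by (simp add: y_def cinner_add_left cinner_add_right cinner_scale_left cinner_scale_right
          vector_scalar_commute algebra_simps power2_eq_square)
    have nf: "cinner y y = cinner v v + complex_of_real t * (cinner v z + cinner z v)
        + complex_of_real t ^ 2 * cinner z z"
      by (simp add: y_def cinner_add_left cinner_add_right cinner_scale_left cinner_scale_right
          algebra_simps power2_eq_square)
    have "Re (cinner y (A *v y)) - \<mu> * Re (cinner y y) = 2 * t * n + t\<^sup>2 * c"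
      using zAv Avz unfolding qf nf vAz
      by (simp add: v(2) \<mu> n_def c_def algebra_simps power2_eq_square)
    with max[OF \<open>y \<in> W\<close>] show ?thesis by (simp add: Re_cinner_self)
  qed
  hence "n = 0"
    by (intro quadratic_nonpos_imp_linear_coeff_zero) (simp_all add: n_def Re_cinner_self)
  thus ?thesis by (simp add: n_def z_def Re_cinner_self)
qed

lemma hermitian_eigenvector_orthogonal:
  fixes A :: "'n::finite cmat"
  assumes herm: "adj A = A"
    and S: "\<And>u. u \<in> S \<Longrightarrow> A *v u = complex_of_real (lam u) *s u"
    and x: "\<And>u. u \<in> S \<Longrightarrow> cinner u x = 0" "x \<noteq> 0"
  obtains v \<mu> where "\<And>u. u \<in> S \<Longrightarrow> cinner u v = 0" "cinner v v = 1"
    "A *v v = complex_of_real \<mu> *s v"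
proof -
  define W where "W = {y. \<forall>u\<in>S. cinner u y = 0}"
  have "subspace W"
    unfolding subspace_def W_def
    by (auto simp: cinner_add_right scaleR_eq_vector_smult cinner_scale_right)
  moreover have "x \<in> W" using x by (simp add: W_def)
  ultimately obtain v where v: "v \<in> W" "norm v = 1"
    and max: "\<And>y. y \<in> W \<Longrightarrow> Re (cinner y (A *v y)) \<le> Re (cinner v (A *v v)) * (norm y)\<^sup>2"
    using Rayleigh_quotient_attains_max x(2) by metis
  have "cinner u (A *v y) = 0" if "u \<in> S" "y \<in> W" for u y
  proof -
    have "cinner u (A *v y) = cinner (A *v u) y" using cinner_adj[of u A y] herm by simp
    thus ?thesis using S that by (simp add: cinner_scale_left W_def)
  qed
  hence "A *v y \<in> W" if "y \<in> W" for y using that by (simp add: W_def)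
  moreover have "cinner v v = 1" using v(2) by (simp add: cinner_self)
  ultimately have "A *v v = complex_of_real (Re (cinner v (A *v v))) *s v"
    using v(1) max
    by (intro Rayleigh_maximiser_eigenvector[OF herm, of W])
      (auto simp: W_def cinner_add_right cinner_scale_right mult.commute)
  with v that \<open>cinner v v = 1\<close> show thesis by (auto simp: W_def)
qed

theorem hermitian_spectral:
  fixes A :: "'n::finite cmat"
  assumes herm: "adj A = A"
  obtains S lam where "orthonormal_eigensystem A S lam" "finite S"
    "\<And>x. x = (\<Sum>u\<in>S. cinner u x *s u)"
proof -
  define P where "P k \<longleftrightarrow> (\<exists>S lam. orthonormal_eigensystem A S lam \<and> card S = k)" for k
  have "P 0" unfolding P_def by (rule exI[of _ "{}"]) (simp add: orthonormal_eigensystem_def)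
  moreover have "\<forall>k. P k \<longrightarrow> k \<le> DIM(complex^'n)"
    unfolding P_def using orthonormal_eigensystem_card_le by blast
  ultimately obtain k where "P k" and kmax: "\<And>j. P j \<Longrightarrow> j \<le> k"
    using Nat.ex_has_greatest_nat[of P 0 "DIM(complex^'n)"] by blast
  then obtain S lam where es: "orthonormal_eigensystem A S lam" and cS: "card S = k"
    unfolding P_def by blast
  have fin: "finite S" using orthonormal_eigensystem_card_le[OF es] by blast
  text \<open>A nonzero remainder of the expansion would extend a maximal eigensystem.\<close>
  have "x = (\<Sum>u\<in>S. cinner u x *s u)" for x
  proof (rule ccontr)
    define y where "y = x - (\<Sum>u\<in>S. cinner u x *s u)"
    assume "x \<noteq> (\<Sum>u\<in>S. cinner u x *s u)"
    hence "y \<noteq> 0" by (simp add: y_def)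
    moreover have "cinner u y = 0" if "u \<in> S" for u
      using cinner_orthonormal_expansion[OF es fin that] by (simp add: y_def cinner_diff_right)
    moreover have "A *v u = complex_of_real (lam u) *s u" if "u \<in> S" for u
      using es that by (simp add: orthonormal_eigensystem_def)
    ultimately obtain v \<mu> where v: "\<And>u. u \<in> S \<Longrightarrow> cinner u v = 0" "cinner v v = 1"
      "A *v v = complex_of_real \<mu> *s v"
      using hermitian_eigenvector_orthogonal[OF herm] by metis
    have "v \<notin> S" using v by force
    moreover have "cinner v u = 0" if "u \<in> S" for u
      using v(1)[OF that] cinner_commute[of v u] by simp
    ultimately have "orthonormal_eigensystem A (insert v S) (lam(v := \<mu>))"
      using es v unfolding orthonormal_eigensystem_def by auto
    hence "P (Suc k)" unfolding P_def using \<open>v \<notin> S\<close> fin cS by (intro exI[of _ "insert v S"]) auto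
    thus False using kmax by fastforce
  qed
  with es fin that show thesis by blast
qed

section \<open>The positive square root\<close>

lemma matrix_eq_on_expansion:
  assumes "\<And>x. x = (\<Sum>u\<in>S. cinner u x *s u)" and "\<And>u. u \<in> S \<Longrightarrow> M *v u = N *v u"
  shows "M = N"
proof -
  have "M *v x = N *v x" for x
  proof -
    have "M *v x = (\<Sum>u\<in>S. cinner u x *s (M *v u))"
      by (subst assms(1)) (simp add: vec.sum vector_scalar_commute)
    also have "\<dots> = (\<Sum>u\<in>S. cinner u x *s (N *v u))"
      by (simp add: assms(2))
    also have "\<dots> = N *v x"
      by (subst (2) assms(1)) (simp add: vec.sum vector_scalar_commute)
    finally show ?thesis .
  qed
  thus ?thesis by (simp add: matrix_eq)
qed

lemma matrix_vector_mult_rank_one_sum: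
  assumes "finite S"
  shows "(\<chi> a b. \<Sum>u\<in>S. g u * u$a * cnj (u$b)) *v x = (\<Sum>u\<in>S. (g u * cinner u x) *s u)"
proof -
  have "((\<chi> a b. \<Sum>u\<in>S. g u * u$a * cnj (u$b)) *v x) $ a
      = (\<Sum>b\<in>UNIV. \<Sum>u\<in>S. g u * u$a * cnj (u$b) * x$b)" for a
    by (simp add: matrix_vector_mult_def sum_distrib_right)
  also have "\<dots> a = (\<Sum>u\<in>S. \<Sum>b\<in>UNIV. g u * u$a * cnj (u$b) * x$b)" for a
    by (rule sum.swap)
  also have "\<dots> a = (\<Sum>u\<in>S. (g u * cinner u x) *s u) $ a" for a
    by (simp add: sum_component cinner_def sum_distrib_left mult_ac)
  finally show ?thesis by (simp add: vec_eq_iff)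
qed

text \<open>The eigenvalue equation \<open>T\<^sup>2 u = c\<^sup>2 u\<close> forces \<open>T u = c u\<close>, since \<open>y = T u - c u\<close>
  satisfies \<open>T y = - c y\<close>, which positivity of \<open>T\<close> only allows for \<open>y = 0\<close>.\<close>

lemma pos_semidef_square_eigenvector:
  fixes T :: "'n::finite cmat"
  assumes T: "pos_semidef T" and u: "(T ** T) *v u = complex_of_real (c\<^sup>2) *s u" and "c > 0"
  shows "T *v u = complex_of_real c *s u"
proof -
  define y where "y = T *v u - complex_of_real c *s u"
  have "T *v y = (T ** T) *v u - complex_of_real c *s (T *v u)"
    by (simp add: y_def matrix_vector_mult_diff_distrib vector_scalar_commute matrix_vector_mul_assoc)
  also have "\<dots> = - (complex_of_real c *s y)"
    by (simp add: u y_def vector_ssub_ldistrib vector_smult_assoc power2_eq_square)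
  finally have "Re (cinner y (T *v y)) = - (c * (norm y)\<^sup>2)"
    by (simp add: cinner_minus_right cinner_scale_right cinner_self)
  moreover have "0 \<le> Re (cinner y (T *v y))" using T by (simp add: pos_semidef_def)
  ultimately have "(norm y)\<^sup>2 \<le> 0" using \<open>c > 0\<close> by (simp add: mult_le_0_iff)
  thus ?thesis by (simp add: y_def)
qed

lemma pos_def_psd_sqrt:
  fixes A :: "'n::finite cmat"
  assumes pd: "pos_def A"
  obtains R where "pos_semidef R" "adj R = R" "R ** R = A"
    "\<And>T. pos_semidef T \<Longrightarrow> T ** T = A \<Longrightarrow> T = R"
proof -
  have "adj A = A" using pd by (simp add: pos_def_def)
  then obtain S lam where es: "orthonormal_eigensystem A S lam" and fin: "finite S"
    and expand: "\<And>x. x = (\<Sum>u\<in>S. cinner u x *s u)"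
    using hermitian_spectral by blast
  have uu: "cinner u u = 1" and Au: "A *v u = complex_of_real (lam u) *s u" if "u \<in> S" for u
    using es that by (auto simp: orthonormal_eigensystem_def)
  have lam_pos: "lam u > 0" if "u \<in> S" for u
  proof -
    have "u \<noteq> 0" using uu[OF that] by auto
    hence "0 < Re (cinner u (A *v u))" using pd by (simp add: pos_def_def)
    thus ?thesis using uu[OF that] Au[OF that] by (simp add: cinner_scale_right)
  qed
  define s where "s u = complex_of_real (sqrt (lam u))" for u
  define R where "R = (\<chi> a b. \<Sum>u\<in>S. s u * u$a * cnj (u$b))"
  have Rx: "R *v x = (\<Sum>u\<in>S. (s u * cinner u x) *s u)" for x
    unfolding R_def by (rule matrix_vector_mult_rank_one_sum[OF fin])
  have Ru: "R *v u = s u *s u" if "u \<in> S" for u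
  proof -
    have "R *v u = (\<Sum>w\<in>S. if w = u then s u *s u else 0)"
      unfolding Rx using es that by (intro sum.cong refl) (auto simp: orthonormal_eigensystem_def)
    thus ?thesis using fin that by simp
  qed
  have RR: "R ** R = A"
  proof (rule matrix_eq_on_expansion[OF expand])
    fix u assume u: "u \<in> S"
    have "(R ** R) *v u = (s u * s u) *s u"
      by (simp add: Ru[OF u] vector_scalar_commute vector_smult_assoc flip: matrix_vector_mul_assoc)
    also have "\<dots> = A *v u"
      using lam_pos[OF u] by (simp add: Au[OF u] s_def flip: of_real_mult)
    finally show "(R ** R) *v u = A *v u" .
  qed
  have "adj R = R"
    unfolding R_def adj_def vec_eq_iff by (simp add: s_def mult_ac)
  have "cinner x (R *v x) = complex_of_real (\<Sum>u\<in>S. sqrt (lam u) * (norm (cinner u x))\<^sup>2)" for x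
  proof -
    have "cinner x (R *v x) = (\<Sum>u\<in>S. s u * cinner u x * cinner x u)"
      by (simp add: Rx cinner_sum_right cinner_scale_right)
    also have "\<dots> = (\<Sum>u\<in>S. complex_of_real (sqrt (lam u) * (norm (cinner u x))\<^sup>2))"
      unfolding s_def
      by (intro sum.cong refl)
        (simp only: cinner_commute[of x] mult.assoc complex_norm_square[symmetric] of_real_mult)
    finally show ?thesis by simp
  qed
  moreover have "0 \<le> (\<Sum>u\<in>S. sqrt (lam u) * (norm (cinner u x))\<^sup>2)" for x
    using lam_pos by (intro sum_nonneg mult_nonneg_nonneg) (auto simp: less_imp_le)
  ultimately have "pos_semidef R" by (simp add: pos_semidef_def)
  moreover have "T = R" if T: "pos_semidef T" "T ** T = A" for T
  proof (rule matrix_eq_on_expansion[OF expand])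
    fix u assume "u \<in> S"
    hence "(T ** T) *v u = complex_of_real ((sqrt (lam u))\<^sup>2) *s u"
      using lam_pos[of u] T(2) Au[of u] by (simp flip: of_real_power)
    thus "T *v u = R *v u"
      using pos_semidef_square_eigenvector[OF T(1)] lam_pos \<open>u \<in> S\<close> by (simp add: Ru s_def)
  qed
  ultimately show thesis using that \<open>adj R = R\<close> RR by blast
qed

lemma
  fixes A :: "'n::finite cmat"
  assumes "pos_def A"
  shows msqrt_square: "msqrt A ** msqrt A = A" and adj_msqrt: "adj (msqrt A) = msqrt A"
    and invertible_msqrt: "invertible (msqrt A)"
proof -
  obtain R where "pos_semidef R" "adj R = R" "R ** R = A"
    and uniq: "\<And>T. pos_semidef T \<Longrightarrow> T ** T = A \<Longrightarrow> T = R"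
    using pos_def_psd_sqrt[OF assms] by blast
  hence "msqrt A = R" unfolding msqrt_def by (intro the_equality) blast+
  thus sq: "msqrt A ** msqrt A = A" and "adj (msqrt A) = msqrt A"
    using \<open>R ** R = A\<close> \<open>adj R = R\<close> by auto
  obtain B where "B ** A = mat 1"
    using pos_def_invertible[OF assms] invertible_left_inverse by blast
  hence "(B ** msqrt A) ** msqrt A = mat 1" by (simp add: sq flip: matrix_mul_assoc)
  thus "invertible (msqrt A)" using invertible_left_inverse by blast
qed

section \<open>Distorted algebras as conjugated \<open>*\<close>-algebras\<close>

lemma alg_least: "star_algebra M \<Longrightarrow> S \<subseteq> M \<Longrightarrow> alg S \<subseteq> M"
  unfolding alg_def by blast

lemma subset_alg_rho: "S \<subseteq> alg_rho \<rho> S"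
  unfolding alg_rho_def by blast

lemma alg_rho_least: "distorted_algebra \<rho> B \<Longrightarrow> S \<subseteq> B \<Longrightarrow> alg_rho \<rho> S \<subseteq> B"
  unfolding alg_rho_def by blast

lemma distorted_algebra_alg_rho: "distorted_algebra \<rho> (alg_rho \<rho> S)"
  unfolding distorted_algebra_def op_subspace_def alg_rho_def by blast

lemma msqrt_cancel:
  assumes "pos_def \<rho>"
  shows "msqrt \<rho> ** matrix_inv (msqrt \<rho>) = mat 1" "matrix_inv (msqrt \<rho>) ** msqrt \<rho> = mat 1"
    "X ** msqrt \<rho> ** matrix_inv (msqrt \<rho>) = X" "X ** matrix_inv (msqrt \<rho>) ** msqrt \<rho> = X"
  using matrix_inv_right[OF invertible_msqrt[OF assms]] matrix_inv_left[OF invertible_msqrt[OF assms]]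
  by (simp_all flip: matrix_mul_assoc)

lemma matrix_inv_eq_msqrt:
  assumes "pos_def \<rho>"
  shows "matrix_inv \<rho> = matrix_inv (msqrt \<rho>) ** matrix_inv (msqrt \<rho>)"
proof (rule matrix_inv_unique_left[symmetric])
  have "matrix_inv (msqrt \<rho>) ** matrix_inv (msqrt \<rho>) ** (msqrt \<rho> ** msqrt \<rho>) = mat 1"
    by (simp add: matrix_mul_assoc msqrt_cancel[OF assms])
  thus "matrix_inv (msqrt \<rho>) ** matrix_inv (msqrt \<rho>) ** \<rho> = mat 1"
    by (simp only: msqrt_square[OF assms])
qed (rule pos_def_invertible[OF assms])

lemma D_Dinv:
  assumes "pos_def \<rho>" shows "D \<rho> (Dinv \<rho> X) = X"
  by (simp add: D_def Dinv_def matrix_mul_assoc msqrt_cancel[OF assms])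

lemma inj_Dinv: "pos_def \<rho> \<Longrightarrow> inj (Dinv \<rho>)"
  by (rule inj_on_inverseI[of _ "D \<rho>"]) (rule D_Dinv)

lemma Dinv_add: "Dinv \<rho> (X + Y) = Dinv \<rho> X + Dinv \<rho> Y"
  by (simp add: Dinv_def matrix_add_ldistrib matrix_add_rdistrib)

lemma Dinv_csmult: "Dinv \<rho> (csmult c X) = csmult c (Dinv \<rho> X)"
  by (simp add: Dinv_def csmult_matrix_mult_left csmult_matrix_mult_right)

lemma adj_Dinv:
  assumes "pos_def \<rho>" shows "adj (Dinv \<rho> X) = Dinv \<rho> (adj X)"
  by (simp add: Dinv_def adj_mult adj_matrix_inv[OF invertible_msqrt[OF assms]]
      adj_msqrt[OF assms] matrix_mul_assoc)

lemma Dinv_mult: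
  assumes "pos_def \<rho>" shows "Dinv \<rho> X ** Dinv \<rho> Y = Dinv \<rho> (X ** matrix_inv \<rho> ** Y)"
  by (simp add: Dinv_def matrix_inv_eq_msqrt[OF assms] matrix_mul_assoc)

lemma Dinv_mult_D:
  assumes "pos_def \<rho>" shows "Dinv \<rho> X ** D \<rho> Z ** Dinv \<rho> Y = Dinv \<rho> (X ** Z ** Y)"
  by (simp add: D_def Dinv_def matrix_mul_assoc msqrt_cancel[OF assms])

lemma
  fixes \<rho> \<sigma> :: "'n::finite cmat"
  assumes "pos_def \<rho>" "invertible \<sigma>"
  shows invertible_Dinv: "invertible (Dinv \<rho> \<sigma>)"
    and matrix_inv_Dinv: "matrix_inv (Dinv \<rho> \<sigma>) = D \<rho> (matrix_inv \<sigma>)"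
proof -
  show inv: "invertible (Dinv \<rho> \<sigma>)"
    unfolding Dinv_def
    by (intro invertible_mult invertible_matrix_inv invertible_msqrt assms)
  have \<sigma>_cancel: "X ** \<sigma> ** matrix_inv \<sigma> = X" for X :: "'n cmat"
    by (simp add: matrix_inv_right[OF assms(2)] flip: matrix_mul_assoc)
  have "Dinv \<rho> \<sigma> ** D \<rho> (matrix_inv \<sigma>) = mat 1"
    by (simp add: D_def Dinv_def matrix_mul_assoc \<sigma>_cancel msqrt_cancel[OF assms(1)])
  thus "matrix_inv (Dinv \<rho> \<sigma>) = D \<rho> (matrix_inv \<sigma>)"
    by (rule matrix_inv_unique_right[symmetric, OF _ inv])
qed

lemma star_algebra_Dinv_image:
  assumes "pos_def \<rho>" "distorted_algebra \<rho> B"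
  shows "star_algebra (Dinv \<rho> ` B)"
proof -
  have "0 \<in> Dinv \<rho> ` B"
    using assms(2) rev_image_eqI[of 0 B 0 "Dinv \<rho>"]
    by (simp add: distorted_algebra_def op_subspace_def Dinv_def)
  with assms show ?thesis
    unfolding star_algebra_def op_subspace_def distorted_algebra_def
    by (auto simp: Dinv_add[symmetric] Dinv_csmult[symmetric] Dinv_mult[OF assms(1)]
        adj_Dinv[OF assms(1)])
qed

lemma alg_Dinv_subset_Dinv_alg_rho:
  assumes "pos_def \<rho>"
  shows "alg (Dinv \<rho> ` S) \<subseteq> Dinv \<rho> ` alg_rho \<rho> S"
  by (rule alg_least[OF star_algebra_Dinv_image[OF assms distorted_algebra_alg_rho]])
    (rule image_mono[OF subset_alg_rho])

lemma linear_inj_image_subspace_eq: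
  fixes f :: "'a::euclidean_space \<Rightarrow> 'a"
  assumes "linear f" "inj f" "subspace S" "f ` S \<subseteq> S"
  shows "f ` S = S"
proof (rule subspace_dim_equal[OF linear_subspace_image[OF assms(1,3)] assms(3,4)])
  show "dim S \<le> dim (f ` S)"
    using dim_image_eq[OF assms(1) inj_on_subset[OF assms(2) subset_UNIV]] by simp
qed

text \<open>An injective left multiplication maps the finite-dimensional algebra onto itself; this first
  produces the unit of the algebra and then the inverse of \<open>s\<close>.\<close>

lemma matrix_inv_mem_algebra:
  fixes M :: "'n::finite cmat set"
  assumes M: "op_subspace M" "\<forall>X\<in>M. \<forall>Y\<in>M. X ** Y \<in> M"
    and s: "s \<in> M" "invertible s"
  shows "matrix_inv s \<in> M"
proof -
  have cancel: "s ** X = s ** Y \<Longrightarrow> X = Y" for X Y :: "'n cmat"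
    by (metis matrix_inv_left[OF s(2)] matrix_mul_assoc matrix_mul_lid)
  define L :: "'n cmat \<Rightarrow> 'n cmat" where "L = (**) s"
  have "linear L"
    unfolding L_def by (rule linearI) (simp_all add: matrix_add_ldistrib matrix_scalar_ac scalar_matrix_assoc)
  moreover have "inj L" unfolding L_def by (rule injI) (rule cancel)
  moreover have "L ` M \<subseteq> M" unfolding L_def using M s by auto
  ultimately have onto: "(**) s ` M = M"
    using linear_inj_image_subspace_eq op_subspace_imp_subspace[OF M(1)] unfolding L_def by blast
  have "s \<in> (**) s ` M" using s(1) onto by simp
  then obtain E where "E \<in> M" "s ** E = s ** mat 1" by auto
  hence "mat 1 \<in> M" using cancel by blast
  hence "mat 1 \<in> (**) s ` M" using onto by simp
  then obtain Y where "Y \<in> M" "s ** Y = mat 1" by auto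
  with matrix_inv_unique_right[OF _ s(2)] show ?thesis by blast
qed

lemma distorted_algebra_change_density:
  assumes \<rho>: "pos_def \<rho>" and \<sigma>: "pos_def \<sigma>" and B: "distorted_algebra \<rho> B" "\<sigma> \<in> B"
  shows "distorted_algebra \<sigma> B"
proof -
  have A: "star_algebra (Dinv \<rho> ` B)" by (rule star_algebra_Dinv_image[OF \<rho> B(1)])
  have mult: "P ** Q \<in> Dinv \<rho> ` B" if "P \<in> Dinv \<rho> ` B" "Q \<in> Dinv \<rho> ` B" for P Q
    using A that unfolding star_algebra_def by blast
  have "D \<rho> (matrix_inv \<sigma>) \<in> Dinv \<rho> ` B"
    using matrix_inv_mem_algebra[of "Dinv \<rho> ` B" "Dinv \<rho> \<sigma>"] A B(2)
      pos_def_invertible[OF \<sigma>] invertible_Dinv[OF \<rho>] matrix_inv_Dinv[OF \<rho>]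
    by (simp add: star_algebra_def)
  hence "Dinv \<rho> (X ** matrix_inv \<sigma> ** Y) \<in> Dinv \<rho> ` B" if "X \<in> B" "Y \<in> B" for X Y
    unfolding Dinv_mult_D[OF \<rho>, symmetric] using that by (intro mult) auto
  hence "X ** matrix_inv \<sigma> ** Y \<in> B" if "X \<in> B" "Y \<in> B" for X Y
    using that inj_image_mem_iff[OF inj_Dinv[OF \<rho>]] by blast
  with B(1) show ?thesis by (simp add: distorted_algebra_def)
qed

theorem mainTheorem7:
  fixes V :: "'n::finite cmat set" and \<rho> \<sigma> :: "'n cmat"
  assumes "op_subspace V"
    and "supp_set V = UNIV"
    and "pos_def \<rho>"
    and "compatible \<rho> (alg (Dinv \<rho> ` V))"
    and "pos_def \<sigma>"
    and "Dinv \<rho> \<sigma> \<in> alg (Dinv \<rho> ` V)"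
  shows "alg (Dinv \<sigma> ` V) \<subseteq> Dinv \<sigma> ` alg_rho \<rho> V"
proof -
  have "\<sigma> \<in> alg_rho \<rho> V"
    using assms(6) alg_Dinv_subset_Dinv_alg_rho[OF assms(3)]
      inj_image_mem_iff[OF inj_Dinv[OF assms(3)]] by blast
  hence "distorted_algebra \<sigma> (alg_rho \<rho> V)"
    by (rule distorted_algebra_change_density[OF assms(3,5) distorted_algebra_alg_rho])
  hence "alg_rho \<sigma> V \<subseteq> alg_rho \<rho> V"
    by (rule alg_rho_least) (rule subset_alg_rho)
  thus ?thesis
    using alg_Dinv_subset_Dinv_alg_rho[OF assms(5), of V] by blast
qed

end
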